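(* Let $\mathcal H_1,\mathcal H_2$ be Hilbert spaces, let $\rho$ be a normal state on $\mathcal B(\mathcal H_2)$, and let $\Pi=\mathrm{id}\otimes\rho:\mathcal B(\mathcal H_1\otimes\mathcal H_2)\to\mathcal B(\mathcal H_1)$. Suppose $\epsilon\ge0$ and $A\in\mathcal B(\mathcal H_1\otimes\mathcal H_2)$ satisfy $\|[A,\mathbb 1\otimes B]\|\le\epsilon\|B\|$ for all $B\in\mathcal B(\mathcal H_2)$. Then $$\|\Pi(A)\otimes\mathbb 1-A\|\le2\epsilon.$$
   Context: For a normal state $\rho$ with density matrix $\rho=\sum_k\rho_k|\xi_k\rangle\langle\xi_k|$ (orthonormal $\xi_k$, $\rho_k\ge0$, $\sum_k\rho_k=1$), the map $\Pi=\mathrm{id}\otimes\rho$ is defined by $\Pi(A)=\sum_k\rho_kA_{\xi_k}$, where for a unit vector $\eta\in\mathcal H_2$, $A_\eta\in\mathcal B(\mathcal H_1)$ is defined by $\langle\phi,A_\eta\psi\rangle=\langle\phi\otimes\eta,A\,\psi\otimes\eta\rangle$ for $\phi,\psi\in\mathcal H_1$ (i.e. $\Pi$ is the partial expectation in the state $\rho$ on the second factor). *)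

theory Defs
  imports "HOL-Analysis.Analysis"
begin

text \<open>Concrete model of complex Hilbert spaces: every Hilbert space is unitarily
equivalent to l2(I) for an orthonormal-basis index set I; we take I to be a type.
The tensor product l2(I) (x) l2(J) is l2(I x J).  Operators are functions on
('i => complex); only their behaviour on l2 matters.\<close>

definition l2 :: "('i \<Rightarrow> complex) set" where
  "l2 = {f. (\<lambda>i. (cmod (f i))\<^sup>2) summable_on UNIV}"

definition l2inner :: "('i \<Rightarrow> complex) \<Rightarrow> ('i \<Rightarrow> complex) \<Rightarrow> complex" where
  "l2inner f g = (\<Sum>\<^sub>\<infinity>i. cnj (f i) * g i)"

definition l2norm :: "('i \<Rightarrow> complex) \<Rightarrow> real" where
  "l2norm f = sqrt (\<Sum>\<^sub>\<infinity>i. (cmod (f i))\<^sup>2)"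

definition bounded_op :: "(('i \<Rightarrow> complex) \<Rightarrow> ('i \<Rightarrow> complex)) \<Rightarrow> bool" where
  "bounded_op T \<longleftrightarrow>
     (\<forall>f\<in>l2. T f \<in> l2) \<and>
     (\<forall>f\<in>l2. \<forall>g\<in>l2. T (\<lambda>i. f i + g i) = (\<lambda>i. T f i + T g i)) \<and>
     (\<forall>f\<in>l2. \<forall>c. T (\<lambda>i. c * f i) = (\<lambda>i. c * T f i)) \<and>
     (\<exists>C. \<forall>f\<in>l2. l2norm (T f) \<le> C * l2norm f)"

definition opnorm :: "(('i \<Rightarrow> complex) \<Rightarrow> ('j \<Rightarrow> complex)) \<Rightarrow> real" where
  "opnorm T = Sup {l2norm (T f) | f. f \<in> l2 \<and> l2norm f \<le> 1}"

definition id_tensor :: "(('j \<Rightarrow> complex) \<Rightarrow> ('j \<Rightarrow> complex))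
    \<Rightarrow> ('i \<times> 'j \<Rightarrow> complex) \<Rightarrow> ('i \<times> 'j \<Rightarrow> complex)" where
  "id_tensor B f = (\<lambda>(i, j). B (\<lambda>j'. f (i, j')) j)"

definition tensor_id :: "(('i \<Rightarrow> complex) \<Rightarrow> ('i \<Rightarrow> complex))
    \<Rightarrow> ('i \<times> 'j \<Rightarrow> complex) \<Rightarrow> ('i \<times> 'j \<Rightarrow> complex)" where
  "tensor_id C f = (\<lambda>(i, j). C (\<lambda>i'. f (i', j)) i)"

text \<open>A_eta: <phi, A_eta psi> = <phi (x) eta, A (psi (x) eta)>, i.e.
  (A_eta psi) i = sum_j conj(eta j) * (A (psi (x) eta)) (i, j).\<close>
definition partial_vec :: "(('i \<times> 'j \<Rightarrow> complex) \<Rightarrow> ('i \<times> 'j \<Rightarrow> complex))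
    \<Rightarrow> ('j \<Rightarrow> complex) \<Rightarrow> ('i \<Rightarrow> complex) \<Rightarrow> ('i \<Rightarrow> complex)" where
  "partial_vec A \<eta> \<psi> = (\<lambda>i. \<Sum>\<^sub>\<infinity>j. cnj (\<eta> j) * A (\<lambda>(i', j'). \<psi> i' * \<eta> j') (i, j))"

text \<open>Pi = id (x) rho for rho = sum_{k in K} rho_k |xi_k><xi_k|:
  Pi(A) = sum_{k in K} rho_k A_{xi_k}.\<close>
definition partial_state :: "('k \<Rightarrow> real) \<Rightarrow> ('k \<Rightarrow> 'j \<Rightarrow> complex) \<Rightarrow> 'k set
    \<Rightarrow> (('i \<times> 'j \<Rightarrow> complex) \<Rightarrow> ('i \<times> 'j \<Rightarrow> complex))
    \<Rightarrow> ('i \<Rightarrow> complex) \<Rightarrow> ('i \<Rightarrow> complex)" where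
  "partial_state \<rho> \<xi> K A \<psi> =
     (\<lambda>i. \<Sum>\<^sub>\<infinity>k\<in>K. complex_of_real (\<rho> k) * partial_vec A (\<xi> k) \<psi> i)"

end

theory Submission
  imports Defs
begin

text \<open>
  For a unit vector xi, the slice A_xi (x) 1 - A is split as (A_xi (x) 1 - D) + (D - A), where D
  is the pinching of A along the standard basis (delta_a) of the second factor: D keeps the
  diagonal blocks (1 (x) |delta_a><delta_a|) A (1 (x) |delta_a><delta_a|).
  (1) D - A: on finitely many columns, D is the average of U A U over the sign-flip unitaries
      U = 1 (x) diag(+-1), and U A U - A = U [A, U] has norm at most eps.
  (2) A_xi (x) 1 - D: on column a it is minus the commutator of A with the contraction
      1 (x) |delta_a><xi| evaluated at psi_a (x) xi, hence at most eps norm psi_a; Cauchy-Schwarz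
      over the columns gives eps norm psi.
  Averaging the pure-state bound 2 eps with the weights rho_k gives the theorem.  Since the
  vectors involved are not known a priori to be square-summable, all estimates are proved as
  weak bounds (tested against finitely supported vectors) and converted to norm bounds at the
  end.
\<close>

section \<open>Square-summable vectors\<close>

text \<open>The squared l2 norm; working with it avoids square roots in most estimates.\<close>
definition sqnorm :: "('i \<Rightarrow> complex) \<Rightarrow> real" where
  "sqnorm f = (\<Sum>\<^sub>\<infinity>x. (cmod (f x))\<^sup>2)"

lemma l2_iff: "f \<in> l2 \<longleftrightarrow> (\<lambda>x. (cmod (f x))\<^sup>2) summable_on UNIV"
  by (simp add: l2_def)

lemma l2norm_sqnorm: "l2norm f = sqrt (sqnorm f)"
  by (simp add: l2norm_def sqnorm_def)

lemma sqnorm_nonneg: "sqnorm f \<ge> 0"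
  unfolding sqnorm_def by (rule infsum_nonneg) auto

lemma l2norm_nonneg: "l2norm f \<ge> 0"
  by (simp add: l2norm_sqnorm sqnorm_nonneg)

lemma sqnorm_scale: "sqnorm (\<lambda>x. c * f x) = (cmod c)\<^sup>2 * sqnorm f"
  unfolding sqnorm_def by (simp add: norm_mult power_mult_distrib infsum_cmult_right')

lemma l2norm_scale: "l2norm (\<lambda>x. c * f x) = cmod c * l2norm f"
  by (simp add: l2norm_sqnorm sqnorm_scale real_sqrt_mult)

lemma l2_scale: "f \<in> l2 \<Longrightarrow> (\<lambda>x. c * f x) \<in> l2"
  unfolding l2_iff by (simp add: norm_mult power_mult_distrib summable_on_cmult_right)

lemma l2_zero [simp]: "(\<lambda>x. 0) \<in> l2"
  unfolding l2_iff by simp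

lemma l2norm_zero [simp]: "l2norm (\<lambda>x. 0) = 0"
  by (simp add: l2norm_def)

lemma cmod_diff_sq_le: "(cmod (a - b))\<^sup>2 \<le> 2 * (cmod a)\<^sup>2 + 2 * (cmod b)\<^sup>2"
proof -
  have "(cmod (a - b))\<^sup>2 \<le> (cmod a + cmod b)\<^sup>2"
    by (simp add: power_mono norm_triangle_ineq4)
  also have "\<dots> \<le> 2 * (cmod a)\<^sup>2 + 2 * (cmod b)\<^sup>2"
    by (smt (verit) sum_squares_bound power2_sum)
  finally show ?thesis .
qed

lemma l2_diff: "f \<in> l2 \<Longrightarrow> g \<in> l2 \<Longrightarrow> (\<lambda>x. f x - g x) \<in> l2"
  unfolding l2_iff
  by (rule summable_on_comparison_test[of "\<lambda>x. 2 * (cmod (f x))\<^sup>2 + 2 * (cmod (g x))\<^sup>2"])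
     (auto intro!: summable_on_add summable_on_cmult_right cmod_diff_sq_le)

lemma l2_add: "f \<in> l2 \<Longrightarrow> g \<in> l2 \<Longrightarrow> (\<lambda>x. f x + g x) \<in> l2"
  using l2_diff[of f "\<lambda>x. - g x"] l2_scale[of g "-1"] by simp

lemma sqnorm_diff_le:
  assumes f: "f \<in> l2" and g: "g \<in> l2"
  shows "sqnorm (\<lambda>x. f x - g x) \<le> 2 * sqnorm f + 2 * sqnorm g"
proof -
  have "sqnorm (\<lambda>x. f x - g x) \<le> (\<Sum>\<^sub>\<infinity>x. 2 * (cmod (f x))\<^sup>2 + 2 * (cmod (g x))\<^sup>2)"
    unfolding sqnorm_def using l2_diff[OF f g] f g
    by (intro infsum_mono) (auto simp: l2_iff intro!: summable_on_add summable_on_cmult_right cmod_diff_sq_le)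
  also have "\<dots> = 2 * sqnorm f + 2 * sqnorm g"
    unfolding sqnorm_def using f g
    by (subst infsum_add) (auto simp: l2_iff infsum_cmult_right' intro!: summable_on_cmult_right)
  finally show ?thesis .
qed

text \<open>The squared norm is the supremum of the finite partial sums of squares.  The upper
  bound needs no summability hypothesis, since sqnorm of a non-summable vector is 0.\<close>
lemma finite_sum_sq_le_sqnorm: "f \<in> l2 \<Longrightarrow> finite G \<Longrightarrow> (\<Sum>x\<in>G. (cmod (f x))\<^sup>2) \<le> sqnorm f"
  unfolding sqnorm_def l2_iff by (rule finite_sum_le_infsum) auto

lemma sqnorm_le_finite_sums:
  assumes "\<And>G. finite G \<Longrightarrow> (\<Sum>x\<in>G. (cmod (v x))\<^sup>2) \<le> b" and "b \<ge> 0"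
  shows "sqnorm v \<le> b"
proof (cases "(\<lambda>x. (cmod (v x))\<^sup>2) summable_on UNIV")
  case True
  show ?thesis unfolding sqnorm_def by (rule infsum_le_finite_sums[OF True]) (use assms in auto)
next
  case False
  then show ?thesis unfolding sqnorm_def using assms(2) by (simp add: infsum_not_exists)
qed

lemma finite_cauchy_schwarz_abs:
  assumes "finite G" and "w \<in> l2"
  shows "(\<Sum>x\<in>G. cmod (\<phi> x) * cmod (w x)) \<le> sqrt (\<Sum>x\<in>G. (cmod (\<phi> x))\<^sup>2) * l2norm w"
proof -
  have "(\<Sum>x\<in>G. cmod (\<phi> x) * cmod (w x)) = (\<Sum>x\<in>G. \<bar>cmod (\<phi> x)\<bar> * \<bar>cmod (w x)\<bar>)"
    by simp
  also have "\<dots> \<le> L2_set (\<lambda>x. cmod (\<phi> x)) G * L2_set (\<lambda>x. cmod (w x)) G"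
    by (rule L2_set_mult_ineq)
  also have "\<dots> \<le> sqrt (\<Sum>x\<in>G. (cmod (\<phi> x))\<^sup>2) * l2norm w"
    unfolding L2_set_def l2norm_sqnorm
    by (rule mult_left_mono) (use finite_sum_sq_le_sqnorm[OF assms(2,1)] in \<open>auto intro: sum_nonneg\<close>)
  finally show ?thesis .
qed

lemma finite_cauchy_schwarz:
  assumes "finite G" and "w \<in> l2"
  shows "cmod (\<Sum>x\<in>G. cnj (\<phi> x) * w x) \<le> sqrt (\<Sum>x\<in>G. (cmod (\<phi> x))\<^sup>2) * l2norm w"
  using norm_sum[of "\<lambda>x. cnj (\<phi> x) * w x" G] finite_cauchy_schwarz_abs[OF assms, of \<phi>]
  by (simp add: norm_mult)

lemma l2_product_summable:
  assumes f: "f \<in> l2" and g: "g \<in> l2"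
  shows "(\<lambda>x. cmod (f x) * cmod (g x)) summable_on UNIV"
    and "(\<Sum>\<^sub>\<infinity>x. cmod (f x) * cmod (g x)) \<le> l2norm f * l2norm g"
proof -
  have fin: "(\<Sum>x\<in>G. cmod (f x) * cmod (g x)) \<le> l2norm f * l2norm g" if G: "finite G" for G
  proof -
    have "sqrt (\<Sum>x\<in>G. (cmod (f x))\<^sup>2) \<le> l2norm f"
      unfolding l2norm_sqnorm using finite_sum_sq_le_sqnorm[OF f G] by simp
    have "(\<Sum>x\<in>G. cmod (f x) * cmod (g x)) \<le> sqrt (\<Sum>x\<in>G. (cmod (f x))\<^sup>2) * l2norm g"
      by (rule finite_cauchy_schwarz_abs[OF G g])
    also have "\<dots> \<le> l2norm f * l2norm g"
      by (rule mult_right_mono[OF _ l2norm_nonneg]) fact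
    finally show ?thesis .
  qed
  show s: "(\<lambda>x. cmod (f x) * cmod (g x)) summable_on UNIV"
    by (rule nonneg_bdd_above_summable_on) (use fin in \<open>auto intro!: bdd_aboveI\<close>)
  show "(\<Sum>\<^sub>\<infinity>x. cmod (f x) * cmod (g x)) \<le> l2norm f * l2norm g"
    by (rule infsum_le_finite_sums[OF s fin])
qed

lemma l2inner_summable: "f \<in> l2 \<Longrightarrow> g \<in> l2 \<Longrightarrow> (\<lambda>x. cnj (f x) * g x) summable_on UNIV"
  by (rule abs_summable_summable) (use l2_product_summable(1)[of f g] in \<open>simp add: norm_mult\<close>)

lemma l2inner_cauchy_schwarz:
  assumes f: "f \<in> l2" and g: "g \<in> l2"
  shows "cmod (l2inner f g) \<le> l2norm f * l2norm g"
proof -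
  have "cmod (l2inner f g) \<le> (\<Sum>\<^sub>\<infinity>x. cmod (f x) * cmod (g x))"
    unfolding l2inner_def using norm_infsum_bound[of "\<lambda>x. cnj (f x) * g x" UNIV]
      l2_product_summable(1)[OF f g] by (simp add: norm_mult)
  also have "\<dots> \<le> l2norm f * l2norm g" by (rule l2_product_summable(2)[OF f g])
  finally show ?thesis .
qed

lemma l2inner_add: "f \<in> l2 \<Longrightarrow> g \<in> l2 \<Longrightarrow> h \<in> l2 \<Longrightarrow>
    l2inner f (\<lambda>x. g x + h x) = l2inner f g + l2inner f h"
  unfolding l2inner_def by (simp add: distrib_left infsum_add l2inner_summable)

lemma l2inner_scale: "l2inner f (\<lambda>x. c * g x) = c * l2inner f g"
  unfolding l2inner_def by (simp add: infsum_cmult_right'[symmetric] algebra_simps)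

lemma sqnorm_unit: assumes "\<xi> \<in> l2" "l2inner \<xi> \<xi> = 1" shows "sqnorm \<xi> = 1"
proof -
  have "(\<lambda>j. cnj (\<xi> j) * \<xi> j) = (\<lambda>j. complex_of_real ((cmod (\<xi> j))\<^sup>2))"
    by (rule ext) (metis complex_norm_square mult.commute)
  moreover have "((\<lambda>j. complex_of_real ((cmod (\<xi> j))\<^sup>2)) has_sum complex_of_real (sqnorm \<xi>)) UNIV"
    unfolding sqnorm_def by (rule has_sum_of_real) (use assms(1) in \<open>simp add: l2_iff\<close>)
  ultimately have "l2inner \<xi> \<xi> = complex_of_real (sqnorm \<xi>)"
    unfolding l2inner_def by (simp add: infsumI)
  then show ?thesis using assms(2) by simp
qed

lemma l2_rows:
  fixes h :: "'i \<times> 'j \<Rightarrow> complex"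
  assumes "h \<in> l2"
  shows "(\<lambda>j. h (i, j)) \<in> l2"
    and "(\<lambda>i. sqnorm (\<lambda>j. h (i, j))) summable_on UNIV"
    and "sqnorm h = (\<Sum>\<^sub>\<infinity>i. sqnorm (\<lambda>j. h (i, j)))"
proof -
  let ?g = "\<lambda>x. (cmod (h x))\<^sup>2"
  have s: "?g summable_on (UNIV \<times> UNIV)" using assms by (simp add: l2_iff)
  have s': "(\<lambda>(i, j). (\<lambda>i j. ?g (i, j)) i j) summable_on (UNIV \<times> UNIV)"
    using s by (simp add: case_prod_unfold)
  show "(\<lambda>j. h (i, j)) \<in> l2"
    using summable_on_SigmaD1[OF s', of i] by (simp add: l2_iff)
  show "(\<lambda>i. sqnorm (\<lambda>j. h (i, j))) summable_on UNIV"
    unfolding sqnorm_def using summable_on_SigmaD[OF s] summable_on_SigmaD1[OF s'] by auto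
  show "sqnorm h = (\<Sum>\<^sub>\<infinity>i. sqnorm (\<lambda>j. h (i, j)))"
    unfolding sqnorm_def using infsum_Sigma_banach[OF s] by simp
qed

lemma l2_of_rows:
  fixes h :: "'i \<times> 'j \<Rightarrow> complex"
  assumes "\<And>i. (\<lambda>j. h (i, j)) \<in> l2" and "(\<lambda>i. sqnorm (\<lambda>j. h (i, j))) summable_on UNIV"
  shows "h \<in> l2"
proof -
  have "(\<lambda>x. (cmod (h x))\<^sup>2) summable_on (UNIV \<times> UNIV)"
    using assms by (intro summable_on_SigmaI) (auto simp: l2_iff sqnorm_def)
  then show ?thesis by (simp add: l2_iff)
qed

lemma l2_transpose:
  fixes h :: "'i \<times> 'j \<Rightarrow> complex"
  assumes "h \<in> l2"
  shows "(\<lambda>(j, i). h (i, j)) \<in> l2" and "sqnorm (\<lambda>(j, i). h (i, j)) = sqnorm h"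
proof -
  have "((\<lambda>x. (cmod (h x))\<^sup>2) has_sum sqnorm h) (UNIV \<times> UNIV)"
    using assms by (simp add: l2_iff sqnorm_def)
  then have "((\<lambda>(j, i). (cmod (h (i, j)))\<^sup>2) has_sum sqnorm h) (UNIV \<times> UNIV)"
    by (subst (asm) has_sum_swap) simp
  then have "((\<lambda>x. (cmod ((\<lambda>(j, i). h (i, j)) x))\<^sup>2) has_sum sqnorm h) UNIV"
    by (simp add: case_prod_unfold)
  then show "(\<lambda>(j, i). h (i, j)) \<in> l2" and "sqnorm (\<lambda>(j, i). h (i, j)) = sqnorm h"
    by (auto simp: l2_iff sqnorm_def has_sum_iff)
qed

lemma l2_columns:
  fixes h :: "'i \<times> 'j \<Rightarrow> complex"
  assumes "h \<in> l2"
  shows "(\<lambda>i. h (i, j)) \<in> l2"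
    and "finite F \<Longrightarrow> (\<Sum>j\<in>F. sqnorm (\<lambda>i. h (i, j))) \<le> sqnorm h"
proof -
  note T = l2_transpose[OF assms]
  show "(\<lambda>i. h (i, j)) \<in> l2" using l2_rows(1)[OF T(1), of j] by simp
  assume "finite F"
  then have "(\<Sum>j\<in>F. sqnorm (\<lambda>i. h (i, j))) \<le> (\<Sum>\<^sub>\<infinity>j. sqnorm (\<lambda>i. h (i, j)))"
    using l2_rows(2)[OF T(1)] by (intro finite_sum_le_infsum) (auto simp: sqnorm_nonneg)
  also have "\<dots> = sqnorm h" using l2_rows(3)[OF T(1)] T(2) by simp
  finally show "(\<Sum>j\<in>F. sqnorm (\<lambda>i. h (i, j))) \<le> sqnorm h" .
qed

lemma l2_tensor:
  assumes u: "u \<in> l2" and v: "v \<in> l2"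
  shows "(\<lambda>(i, j). u i * v j) \<in> l2" and "sqnorm (\<lambda>(i, j). u i * v j) = sqnorm u * sqnorm v"
proof -
  let ?t = "\<lambda>(i, j). u i * v j"
  have row_sq: "sqnorm (\<lambda>j. u i * v j) = (cmod (u i))\<^sup>2 * sqnorm v" for i
    by (simp add: sqnorm_scale)
  have "?t \<in> l2"
    by (rule l2_of_rows) (use u v in \<open>auto simp: row_sq l2_scale summable_on_cmult_left l2_iff[of u]\<close>)
  then show "?t \<in> l2" and "sqnorm ?t = sqnorm u * sqnorm v"
    using l2_rows(3)[of ?t] by (auto simp: row_sq infsum_cmult_left' sqnorm_def[of u])
qed

section \<open>Bounded operators\<close>

lemma bounded_op_l2: "bounded_op B \<Longrightarrow> f \<in> l2 \<Longrightarrow> B f \<in> l2"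
  unfolding bounded_op_def by blast

lemma bounded_op_add:
  "bounded_op B \<Longrightarrow> f \<in> l2 \<Longrightarrow> g \<in> l2 \<Longrightarrow> B (\<lambda>x. f x + g x) = (\<lambda>x. B f x + B g x)"
  unfolding bounded_op_def by blast

lemma bounded_op_scale: "bounded_op B \<Longrightarrow> f \<in> l2 \<Longrightarrow> B (\<lambda>x. c * f x) = (\<lambda>x. c * B f x)"
  unfolding bounded_op_def by blast

lemma bounded_op_sqnorm_bound:
  assumes "bounded_op B"
  obtains C where "C \<ge> 0" "\<And>f. f \<in> l2 \<Longrightarrow> sqnorm (B f) \<le> C * sqnorm f"
proof -
  obtain C where C: "\<And>f. f \<in> l2 \<Longrightarrow> l2norm (B f) \<le> C * l2norm f"
    using assms unfolding bounded_op_def by blast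
  have "sqnorm (B f) \<le> C\<^sup>2 * sqnorm f" if f: "f \<in> l2" for f
  proof -
    have "l2norm (B f) \<le> \<bar>C\<bar> * l2norm f"
      using C[OF f] mult_right_mono[OF abs_ge_self l2norm_nonneg, of C f] by linarith
    then have "(l2norm (B f))\<^sup>2 \<le> (\<bar>C\<bar> * l2norm f)\<^sup>2"
      by (rule power_mono) (simp add: l2norm_nonneg)
    then show ?thesis by (simp add: l2norm_sqnorm sqnorm_nonneg power_mult_distrib)
  qed
  then show ?thesis using that[of "C\<^sup>2"] by auto
qed

lemma l2_sum: "finite F \<Longrightarrow> (\<And>j. j \<in> F \<Longrightarrow> v j \<in> l2) \<Longrightarrow> (\<lambda>x. \<Sum>j\<in>F. c j * v j x) \<in> l2"
  by (induction F rule: finite_induct) (auto intro!: l2_add l2_scale)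

lemma bounded_op_sum:
  assumes B: "bounded_op B" and F: "finite F" and v: "\<And>j. j \<in> F \<Longrightarrow> v j \<in> l2"
  shows "B (\<lambda>x. \<Sum>j\<in>F. c j * v j x) = (\<lambda>x. \<Sum>j\<in>F. c j * B (v j) x)"
  using F v
proof (induction F rule: finite_induct)
  case empty
  show ?case using bounded_op_scale[OF B l2_zero, of 0] by simp
next
  case (insert a F)
  then have "(\<lambda>x. c a * v a x) \<in> l2" and "(\<lambda>x. \<Sum>j\<in>F. c j * v j x) \<in> l2"
    by (auto intro: l2_scale l2_sum)
  with insert show ?case
    by (simp add: bounded_op_add[OF B] bounded_op_scale[OF B])
qed

lemma opnorm_le:
  assumes "\<And>f. f \<in> l2 \<Longrightarrow> l2norm f \<le> 1 \<Longrightarrow> l2norm (T f) \<le> c"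
  shows "opnorm T \<le> c"
  unfolding opnorm_def by (rule cSup_least) (use assms in \<open>auto intro: exI[of _ "\<lambda>x. 0"]\<close>)

lemma opnorm_bound:
  assumes hom: "\<And>f c. f \<in> l2 \<Longrightarrow> T (\<lambda>x. c * f x) = (\<lambda>x. c * T f x)"
    and bnd: "\<And>f. f \<in> l2 \<Longrightarrow> l2norm (T f) \<le> C * l2norm f"
    and f: "f \<in> l2"
  shows "l2norm (T f) \<le> opnorm T * l2norm f"
proof (cases "l2norm f = 0")
  case True
  then show ?thesis using bnd[OF f] l2norm_nonneg[of "T f"] by simp
next
  case False
  then have pos: "l2norm f > 0" using l2norm_nonneg[of f] by simp
  define g where "g = (\<lambda>x. complex_of_real (1 / l2norm f) * f x)"
  have g: "g \<in> l2" "l2norm g = 1"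
    unfolding g_def using pos by (simp_all only: l2_scale[OF f] l2norm_scale) (simp add: norm_divide)
  have "bdd_above {l2norm (T h) | h. h \<in> l2 \<and> l2norm h \<le> 1}"
  proof (rule bdd_aboveI[of _ "\<bar>C\<bar>"], safe)
    fix h :: "'a \<Rightarrow> complex" assume h: "h \<in> l2" "l2norm h \<le> 1"
    have "l2norm (T h) \<le> \<bar>C\<bar> * l2norm h"
      using bnd[OF h(1)] mult_right_mono[OF abs_ge_self l2norm_nonneg, of C h] by linarith
    also have "\<dots> \<le> \<bar>C\<bar>" using h(2) l2norm_nonneg[of h] by (simp add: mult_left_le)
    finally show "l2norm (T h) \<le> \<bar>C\<bar>" .
  qed
  then have Tg: "l2norm (T g) \<le> opnorm T"
    unfolding opnorm_def by (rule cSup_upper[rotated]) (use g in auto)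
  have "f = (\<lambda>x. complex_of_real (l2norm f) * g x)" unfolding g_def using pos by auto
  then have "T f = (\<lambda>x. complex_of_real (l2norm f) * T g x)" using hom[OF g(1)] by metis
  then have "l2norm (T f) = l2norm f * l2norm (T g)" by (simp add: l2norm_scale l2norm_nonneg)
  also have "\<dots> \<le> l2norm f * opnorm T" using Tg pos by simp
  finally show ?thesis by (simp add: mult.commute)
qed

lemma bounded_op_id_tensor:
  assumes B: "bounded_op B"
  shows "bounded_op (id_tensor B)"
proof -
  obtain C where C: "C \<ge> 0" "\<And>f. f \<in> l2 \<Longrightarrow> sqnorm (B f) \<le> C * sqnorm f"
    using bounded_op_sqnorm_bound[OF B] by blast
  have row: "(\<lambda>j. id_tensor B h (i, j)) = B (\<lambda>j. h (i, j))" for h i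
    by (simp add: id_tensor_def)
  have l2: "id_tensor B h \<in> l2" and sq: "sqnorm (id_tensor B h) \<le> C * sqnorm h" if h: "h \<in> l2" for h
  proof -
    have rows_le: "(\<lambda>i. C * sqnorm (\<lambda>j. h (i, j))) summable_on UNIV"
      by (rule summable_on_cmult_right[OF l2_rows(2)[OF h]])
    have rows: "(\<lambda>i. sqnorm (B (\<lambda>j. h (i, j)))) summable_on UNIV"
      by (rule summable_on_comparison_test[OF rows_le]) (auto intro: C(2) l2_rows(1)[OF h] sqnorm_nonneg)
    show l2: "id_tensor B h \<in> l2"
      by (rule l2_of_rows) (use rows bounded_op_l2[OF B l2_rows(1)[OF h]] in \<open>simp_all add: row\<close>)
    have "sqnorm (id_tensor B h) = (\<Sum>\<^sub>\<infinity>i. sqnorm (B (\<lambda>j. h (i, j))))"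
      using l2_rows(3)[OF l2] by (simp add: row)
    also have "\<dots> \<le> (\<Sum>\<^sub>\<infinity>i. C * sqnorm (\<lambda>j. h (i, j)))"
      by (rule infsum_mono[OF rows rows_le]) (rule C(2)[OF l2_rows(1)[OF h]])
    also have "\<dots> = C * sqnorm h" by (simp add: infsum_cmult_right' l2_rows(3)[OF h])
    finally show "sqnorm (id_tensor B h) \<le> C * sqnorm h" .
  qed
  have "l2norm (id_tensor B h) \<le> sqrt C * l2norm h" if "h \<in> l2" for h
    using sq[OF that] by (simp add: l2norm_sqnorm real_sqrt_mult[symmetric])
  moreover have "id_tensor B (\<lambda>x. f x + g x) = (\<lambda>x. id_tensor B f x + id_tensor B g x)"
    if "f \<in> l2" "g \<in> l2" for f g
    using bounded_op_add[OF B l2_rows(1)[OF that(1)] l2_rows(1)[OF that(2)]]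
    by (auto simp: id_tensor_def fun_eq_iff)
  moreover have "id_tensor B (\<lambda>x. c * f x) = (\<lambda>x. c * id_tensor B f x)" if "f \<in> l2" for f c
    using bounded_op_scale[OF B l2_rows(1)[OF that]] by (auto simp: id_tensor_def fun_eq_iff)
  ultimately show ?thesis
    unfolding bounded_op_def using l2 by blast
qed

section \<open>Weak bounds\<close>

text \<open>Weak bounds need no summability of v,
  add up, pass to convex combinations given pointwise as infinite sums, and imply
  square-summability with the norm bound c.\<close>
definition weakly_bounded :: "('x \<Rightarrow> complex) \<Rightarrow> real \<Rightarrow> bool" where
  "weakly_bounded v c \<longleftrightarrow> (\<forall>G \<phi>. finite G \<longrightarrow>
     cmod (\<Sum>x\<in>G. cnj (\<phi> x) * v x) \<le> c * sqrt (\<Sum>x\<in>G. (cmod (\<phi> x))\<^sup>2))"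

lemma weakly_boundedD:
  "weakly_bounded v c \<Longrightarrow> finite G \<Longrightarrow>
     cmod (\<Sum>x\<in>G. cnj (\<phi> x) * v x) \<le> c * sqrt (\<Sum>x\<in>G. (cmod (\<phi> x))\<^sup>2)"
  unfolding weakly_bounded_def by blast

text \<open>Testing v against its own restriction to a finite set G bounds the partial sums of
  squares of v by c squared.\<close>
lemma weakly_bounded_l2norm:
  assumes v: "weakly_bounded v c" and c: "c \<ge> 0"
  shows "l2norm v \<le> c"
proof -
  have "sqnorm v \<le> c\<^sup>2"
  proof (rule sqnorm_le_finite_sums)
    fix G :: "'a set" assume G: "finite G"
    define s where "s = (\<Sum>x\<in>G. (cmod (v x))\<^sup>2)"
    have s0: "s \<ge> 0" unfolding s_def by (auto intro: sum_nonneg)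
    have "(\<Sum>x\<in>G. cnj (v x) * v x) = complex_of_real s"
      unfolding s_def of_real_sum by (rule sum.cong[OF refl]) (metis complex_norm_square mult.commute)
    then have "sqrt s * sqrt s \<le> c * sqrt s"
      using weakly_boundedD[OF v G, of v] s0 by (simp add: s_def[symmetric])
    then have "sqrt s \<le> c"
      using c s0 mult_right_le_imp_le[of "sqrt s" "sqrt s" c] by (cases "s = 0") auto
    then have "(sqrt s)\<^sup>2 \<le> c\<^sup>2"
      using s0 by (intro power_mono) simp_all
    then show "(\<Sum>x\<in>G. (cmod (v x))\<^sup>2) \<le> c\<^sup>2"
      using s0 by (simp add: s_def)
  qed simp
  then show ?thesis
    using c real_sqrt_le_mono[of "sqnorm v" "c\<^sup>2"] by (simp add: l2norm_sqnorm)
qed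

lemma weakly_bounded_of_l2:
  assumes w: "w \<in> l2" and c: "l2norm w \<le> c"
  shows "weakly_bounded w c"
  unfolding weakly_bounded_def
proof (intro allI impI)
  fix G :: "'a set" and \<phi> :: "'a \<Rightarrow> complex" assume G: "finite G"
  have "cmod (\<Sum>x\<in>G. cnj (\<phi> x) * w x) \<le> sqrt (\<Sum>x\<in>G. (cmod (\<phi> x))\<^sup>2) * l2norm w"
    by (rule finite_cauchy_schwarz[OF G w])
  also have "\<dots> \<le> sqrt (\<Sum>x\<in>G. (cmod (\<phi> x))\<^sup>2) * c"
    by (rule mult_left_mono[OF c]) (simp add: sum_nonneg)
  finally show "cmod (\<Sum>x\<in>G. cnj (\<phi> x) * w x) \<le> c * sqrt (\<Sum>x\<in>G. (cmod (\<phi> x))\<^sup>2)"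
    by (simp add: mult.commute)
qed

lemma weakly_bounded_add:
  assumes v: "weakly_bounded v a" and w: "weakly_bounded w b"
  shows "weakly_bounded (\<lambda>x. v x + w x) (a + b)"
  unfolding weakly_bounded_def
proof (intro allI impI)
  fix G :: "'a set" and \<phi> :: "'a \<Rightarrow> complex" assume G: "finite G"
  have "cmod (\<Sum>x\<in>G. cnj (\<phi> x) * (v x + w x))
      \<le> cmod (\<Sum>x\<in>G. cnj (\<phi> x) * v x) + cmod (\<Sum>x\<in>G. cnj (\<phi> x) * w x)"
    by (simp add: distrib_left sum.distrib norm_triangle_ineq)
  also have "\<dots> \<le> (a + b) * sqrt (\<Sum>x\<in>G. (cmod (\<phi> x))\<^sup>2)"
    using weakly_boundedD[OF v G, of \<phi>] weakly_boundedD[OF w G, of \<phi>] by (simp add: distrib_right)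
  finally show "cmod (\<Sum>x\<in>G. cnj (\<phi> x) * (v x + w x)) \<le> (a + b) * sqrt (\<Sum>x\<in>G. (cmod (\<phi> x))\<^sup>2)" .
qed

lemma weakly_bounded_pointwise:
  assumes "weakly_bounded v c"
  shows "cmod (v x) \<le> c"
  using weakly_boundedD[OF assms, of "{x}" "\<lambda>_. 1"] by simp

lemma has_sum_finite_sum:
  fixes g :: "'x \<Rightarrow> 'k \<Rightarrow> 'c::topological_comm_monoid_add"
  assumes "finite G" and "\<And>x. x \<in> G \<Longrightarrow> (g x has_sum S x) K"
  shows "((\<lambda>k. \<Sum>x\<in>G. g x k) has_sum (\<Sum>x\<in>G. S x)) K"
  using assms by (induction G rule: finite_induct) (auto intro: has_sum_add)

lemma weakly_bounded_convex:
  fixes \<rho> :: "'k \<Rightarrow> real"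
  assumes \<rho>: "\<And>k. k \<in> K \<Longrightarrow> \<rho> k \<ge> 0" "(\<rho> has_sum 1) K"
    and sums: "\<And>x. ((\<lambda>k. complex_of_real (\<rho> k) * v k x) has_sum V x) K"
    and bnd: "\<And>k. k \<in> K \<Longrightarrow> weakly_bounded (v k) c"
  shows "weakly_bounded V c"
  unfolding weakly_bounded_def
proof (intro allI impI)
  fix G :: "'a set" and \<phi> :: "'a \<Rightarrow> complex" assume G: "finite G"
  let ?M = "c * sqrt (\<Sum>x\<in>G. (cmod (\<phi> x))\<^sup>2)"
  have "((\<lambda>k. \<Sum>x\<in>G. cnj (\<phi> x) * (complex_of_real (\<rho> k) * v k x)) has_sum
      (\<Sum>x\<in>G. cnj (\<phi> x) * V x)) K"
    using G by (intro has_sum_finite_sum has_sum_cmult_right sums)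
  then have hs: "((\<lambda>k. complex_of_real (\<rho> k) * (\<Sum>x\<in>G. cnj (\<phi> x) * v k x)) has_sum
      (\<Sum>x\<in>G. cnj (\<phi> x) * V x)) K"
    by (simp add: sum_distrib_left mult.left_commute)
  have hM: "((\<lambda>k. \<rho> k * ?M) has_sum ?M) K"
    using has_sum_cmult_left[OF \<rho>(2), of ?M] by simp
  show "cmod (\<Sum>x\<in>G. cnj (\<phi> x) * V x) \<le> ?M"
  proof (rule norm_infsum_le[OF hs hM])
    fix k assume k: "k \<in> K"
    show "norm (complex_of_real (\<rho> k) * (\<Sum>x\<in>G. cnj (\<phi> x) * v k x)) \<le> \<rho> k * ?M"
      using weakly_boundedD[OF bnd[OF k] G, of \<phi>] \<rho>(1)[OF k]
      by (simp add: norm_mult mult_left_mono)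
  qed
qed

section \<open>Two families of operators on the second factor\<close>

definition flip_sign :: "'b set \<Rightarrow> 'b \<Rightarrow> complex" where
  "flip_sign S j = (if j \<in> S then -1 else 1)"

definition sign_flip :: "'b set \<Rightarrow> ('b \<Rightarrow> complex) \<Rightarrow> ('b \<Rightarrow> complex)" where
  "sign_flip S g = (\<lambda>j. flip_sign S j * g j)"

lemma flip_sign_simps [simp]:
  "flip_sign S j * flip_sign S j = 1" "cnj (flip_sign S j) = flip_sign S j" "cmod (flip_sign S j) = 1"
  unfolding flip_sign_def by auto

lemma sqnorm_sign_flip [simp]: "sqnorm (sign_flip S g) = sqnorm g"
  unfolding sqnorm_def sign_flip_def by (simp add: norm_mult)

lemma bounded_op_sign_flip: "bounded_op (sign_flip S)"
  unfolding bounded_op_def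
proof (intro conjI ballI allI)
  show "sign_flip S f \<in> l2" if "f \<in> l2" for f
    using that unfolding sign_flip_def l2_iff by (simp add: norm_mult)
  show "\<exists>C. \<forall>f\<in>l2. l2norm (sign_flip S f) \<le> C * l2norm f"
    by (rule exI[of _ 1]) (simp add: l2norm_sqnorm)
qed (auto simp: sign_flip_def fun_eq_iff algebra_simps)

lemma opnorm_sign_flip: "opnorm (sign_flip S) \<le> 1"
  by (rule opnorm_le) (simp add: l2norm_sqnorm)

lemma id_tensor_sign_flip: "id_tensor (sign_flip S) h = (\<lambda>x. flip_sign S (snd x) * h x)"
  unfolding id_tensor_def sign_flip_def by (auto simp: fun_eq_iff)

text \<open>Averaging over all sign patterns on a finite set F: the functions
  S \<mapsto> flip_sign S a (a in F) are orthogonal characters of the group Pow F.  The proof toggles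
  membership of a, which is a bijection of Pow F changing the sign of flip_sign S a only.\<close>
definition toggle :: "'b \<Rightarrow> 'b set \<Rightarrow> 'b set" where
  "toggle a S = (if a \<in> S then S - {a} else insert a S)"

lemma sum_Pow_toggle:
  assumes "a \<in> F"
  shows "(\<Sum>S\<in>Pow F. g S) = (\<Sum>S\<in>Pow F. g (toggle a S))"
  by (rule sum.reindex_bij_witness[of _ "toggle a" "toggle a"]) (use assms in \<open>auto simp: toggle_def insert_absorb\<close>)

lemma flip_sign_toggle:
  "flip_sign (toggle a S) a = - flip_sign S a" "b \<noteq> a \<Longrightarrow> flip_sign (toggle a S) b = flip_sign S b"
  unfolding flip_sign_def toggle_def by auto

lemma flip_sign_sum_zero:
  assumes "a \<in> F"
  shows "(\<Sum>S\<in>Pow F. flip_sign S a) = 0"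
  using sum_Pow_toggle[OF assms, of "\<lambda>S. flip_sign S a"] by (simp add: flip_sign_toggle sum_negf)

lemma flip_sign_orthogonal:
  assumes "a \<in> F" "b \<in> F"
  shows "(\<Sum>S\<in>Pow F. flip_sign S a * flip_sign S b) = (if a = b then of_nat (card (Pow F)) else 0)"
proof (cases "a = b")
  case False
  then show ?thesis
    using sum_Pow_toggle[OF assms(1), of "\<lambda>S. flip_sign S a * flip_sign S b"]
    by (simp add: flip_sign_toggle sum_negf)
qed simp

lemma flip_sign_average:
  assumes "finite F" "a \<in> F"
  shows "(\<Sum>S\<in>Pow F. flip_sign S a * ((\<Sum>j\<in>F. flip_sign S j * c j) + r)) = of_nat (card (Pow F)) * c a"
proof -
  have "(\<Sum>S\<in>Pow F. flip_sign S a * ((\<Sum>j\<in>F. flip_sign S j * c j) + r))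
      = (\<Sum>j\<in>F. (\<Sum>S\<in>Pow F. flip_sign S a * flip_sign S j) * c j) + (\<Sum>S\<in>Pow F. flip_sign S a) * r"
    by (simp add: distrib_left sum.distrib sum_distrib_left sum_distrib_right mult.assoc sum.swap[of _ F])
  also have "\<dots> = (\<Sum>j\<in>F. (if a = j then of_nat (card (Pow F)) else 0) * c j)"
    using assms by (simp add: flip_sign_sum_zero flip_sign_orthogonal cong: sum.cong)
  also have "\<dots> = of_nat (card (Pow F)) * c a"
    using assms by (simp add: if_distrib[of "\<lambda>t. t * _"] sum.delta cong: if_cong)
  finally show ?thesis .
qed

text \<open>The operator g \<mapsto> <xi, g> delta_a, i.e. |delta_a><xi|; it has norm at most 1 for a unit
  vector xi and maps xi to the basis vector delta_a.\<close>
definition rank_one :: "('b \<Rightarrow> complex) \<Rightarrow> 'b \<Rightarrow> ('b \<Rightarrow> complex) \<Rightarrow> ('b \<Rightarrow> complex)" where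
  "rank_one \<xi> a g = (\<lambda>j. if j = a then l2inner \<xi> g else 0)"

lemma sqnorm_rank_one: "sqnorm (rank_one \<xi> a g) = (cmod (l2inner \<xi> g))\<^sup>2"
  and l2_rank_one: "rank_one \<xi> a g \<in> l2"
proof -
  have "((\<lambda>j. (cmod (rank_one \<xi> a g j))\<^sup>2) has_sum (cmod (l2inner \<xi> g))\<^sup>2) {a}"
    using has_sum_finite[of "{a}" "\<lambda>j. (cmod (rank_one \<xi> a g j))\<^sup>2"] by (simp add: rank_one_def)
  then have "((\<lambda>j. (cmod (rank_one \<xi> a g j))\<^sup>2) has_sum (cmod (l2inner \<xi> g))\<^sup>2) UNIV"
    by (rule has_sum_cong_neutral[THEN iffD1, rotated -1]) (auto simp: rank_one_def)
  then show "sqnorm (rank_one \<xi> a g) = (cmod (l2inner \<xi> g))\<^sup>2" and "rank_one \<xi> a g \<in> l2"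
    by (auto simp: sqnorm_def l2_iff has_sum_iff)
qed

lemma rank_one_contraction:
  assumes xi: "\<xi> \<in> l2" "sqnorm \<xi> = 1"
  shows "bounded_op (rank_one \<xi> a)" and "opnorm (rank_one \<xi> a) \<le> 1"
proof -
  have bnd: "l2norm (rank_one \<xi> a f) \<le> l2norm f" if "f \<in> l2" for f
    using l2inner_cauchy_schwarz[OF xi(1) that] xi(2)
    by (simp add: l2norm_sqnorm sqnorm_rank_one)
  show "bounded_op (rank_one \<xi> a)"
    unfolding bounded_op_def
  proof (intro conjI ballI allI)
    show "\<exists>C. \<forall>f\<in>l2. l2norm (rank_one \<xi> a f) \<le> C * l2norm f"
      by (rule exI[of _ 1]) (simp add: bnd)
  qed (auto simp: l2_rank_one[unfolded rank_one_def] rank_one_def fun_eq_iff l2inner_add l2inner_scale xi)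
  show "opnorm (rank_one \<xi> a) \<le> 1"
    by (rule opnorm_le) (use bnd in force)
qed

lemma l2_restrict: "\<psi> \<in> l2 \<Longrightarrow> (\<lambda>x. if P x then \<psi> x else 0) \<in> l2"
  unfolding l2_iff by (rule summable_on_comparison_test[of "\<lambda>x. (cmod (\<psi> x))\<^sup>2"]) auto

lemma l2norm_restrict_le:
  assumes "\<psi> \<in> l2"
  shows "l2norm (\<lambda>x. if P x then \<psi> x else 0) \<le> l2norm \<psi>"
proof -
  have "sqnorm (\<lambda>x. if P x then \<psi> x else 0) \<le> sqnorm \<psi>"
    unfolding sqnorm_def using l2_restrict[OF assms, of P] assms
    by (intro infsum_mono) (auto simp: l2_iff)
  then show ?thesis by (simp add: l2norm_sqnorm)
qed

definition column_part :: "('i \<times> 'j \<Rightarrow> complex) \<Rightarrow> 'j \<Rightarrow> ('i \<times> 'j \<Rightarrow> complex)" where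
  "column_part \<psi> a = (\<lambda>x. if snd x = a then \<psi> x else 0)"

lemma l2_column_part: "\<psi> \<in> l2 \<Longrightarrow> column_part \<psi> a \<in> l2"
  unfolding column_part_def by (rule l2_restrict)

text \<open>The pinching of A along the basis of the second factor maps psi
  to x \<mapsto> A (column_part psi (snd x)) x.  At every point whose column lies in the finite set F
  it equals the average of U_S A U_S psi over the sign-flip unitaries U_S = 1 (x) sign_flip S,
  S \<subseteq> F: expanding U_S psi over the columns in F, the character orthogonality of the signs
  keeps only the column of the point.\<close>
lemma pinching_average:
  assumes A: "bounded_op A" and \<psi>: "\<psi> \<in> l2" and F: "finite F" "snd x \<in> F"
  shows "(\<Sum>S\<in>Pow F. flip_sign S (snd x) * A (id_tensor (sign_flip S) \<psi>) x)
       = of_nat (card (Pow F)) * A (column_part \<psi> (snd x)) x"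
proof -
  define off where "off = (\<lambda>y. if snd y \<notin> F then \<psi> y else 0)"
  have off: "off \<in> l2" unfolding off_def by (rule l2_restrict[OF \<psi>])
  have cols: "(\<lambda>y. \<Sum>j\<in>F. flip_sign S j * column_part \<psi> j y) \<in> l2" for S
    using F(1) by (intro l2_sum l2_column_part[OF \<psi>])
  have decomp: "id_tensor (sign_flip S) \<psi> = (\<lambda>y. (\<Sum>j\<in>F. flip_sign S j * column_part \<psi> j y) + off y)"
    if "S \<subseteq> F" for S
  proof
    fix y :: "'a \<times> 'b"
    have "(\<Sum>j\<in>F. flip_sign S j * column_part \<psi> j y) = (if snd y \<in> F then flip_sign S (snd y) * \<psi> y else 0)"
      using F(1) by (simp add: column_part_def if_distrib[of "\<lambda>t. _ * t"] sum.delta cong: if_cong)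
    then show "id_tensor (sign_flip S) \<psi> y = (\<Sum>j\<in>F. flip_sign S j * column_part \<psi> j y) + off y"
      using that by (auto simp: id_tensor_sign_flip off_def flip_sign_def)
  qed
  have "A (id_tensor (sign_flip S) \<psi>) x = (\<Sum>j\<in>F. flip_sign S j * A (column_part \<psi> j) x) + A off x"
    if "S \<subseteq> F" for S
    unfolding decomp[OF that] bounded_op_add[OF A cols off]
      bounded_op_sum[OF A F(1) l2_column_part[OF \<psi>]] by simp
  then have "(\<Sum>S\<in>Pow F. flip_sign S (snd x) * A (id_tensor (sign_flip S) \<psi>) x)
      = (\<Sum>S\<in>Pow F. flip_sign S (snd x) * ((\<Sum>j\<in>F. flip_sign S j * A (column_part \<psi> j) x) + A off x))"
    by (intro sum.cong) auto
  also have "\<dots> = of_nat (card (Pow F)) * A (column_part \<psi> (snd x)) x"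
    by (rule flip_sign_average[OF F])
  finally show ?thesis .
qed

section \<open>Operators that almost commute with the second factor\<close>

definition commutator :: "(('i \<times> 'j \<Rightarrow> complex) \<Rightarrow> ('i \<times> 'j \<Rightarrow> complex))
    \<Rightarrow> (('j \<Rightarrow> complex) \<Rightarrow> ('j \<Rightarrow> complex)) \<Rightarrow> ('i \<times> 'j \<Rightarrow> complex) \<Rightarrow> ('i \<times> 'j \<Rightarrow> complex)" where
  "commutator A B f = (\<lambda>x. A (id_tensor B f) x - id_tensor B (A f) x)"

definition almost_commutes :: "real \<Rightarrow> (('i \<times> 'j \<Rightarrow> complex) \<Rightarrow> ('i \<times> 'j \<Rightarrow> complex)) \<Rightarrow> bool" where
  "almost_commutes \<epsilon> A \<longleftrightarrow>
     (\<forall>B :: ('j \<Rightarrow> complex) \<Rightarrow> ('j \<Rightarrow> complex). bounded_op B \<longrightarrow> opnorm (commutator A B) \<le> \<epsilon> * opnorm B)"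

context
  fixes A :: "('a \<times> 'b \<Rightarrow> complex) \<Rightarrow> ('a \<times> 'b \<Rightarrow> complex)" and \<epsilon> :: real
  assumes A: "bounded_op A" and eps: "\<epsilon> \<ge> 0" and comm: "almost_commutes \<epsilon> A"
begin

text \<open>The commutator is a bounded homogeneous map, so the hypothesis bounds it vector by vector.\<close>
lemma commutator_bound:
  assumes B: "bounded_op B" and f: "f \<in> l2"
  shows "commutator A B f \<in> l2" and "l2norm (commutator A B f) \<le> \<epsilon> * opnorm B * l2norm f"
proof -
  have IB: "bounded_op (id_tensor B :: ('a \<times> 'b \<Rightarrow> complex) \<Rightarrow> _)"
    by (rule bounded_op_id_tensor[OF B])
  obtain CA where CA: "CA \<ge> 0" "\<And>f. f \<in> l2 \<Longrightarrow> sqnorm (A f) \<le> CA * sqnorm f"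
    using bounded_op_sqnorm_bound[OF A] by metis
  obtain CB where CB: "CB \<ge> 0" "\<And>f :: 'a \<times> 'b \<Rightarrow> complex. f \<in> l2 \<Longrightarrow> sqnorm (id_tensor B f) \<le> CB * sqnorm f"
    using bounded_op_sqnorm_bound[OF IB] by metis
  have l2: "commutator A B g \<in> l2" if g: "g \<in> l2" for g
    unfolding commutator_def using g by (intro l2_diff bounded_op_l2[OF A] bounded_op_l2[OF IB])
  show "commutator A B f \<in> l2" by (rule l2[OF f])
  have hom: "commutator A B (\<lambda>x. c * g x) = (\<lambda>x. c * commutator A B g x)" if g: "g \<in> l2" for g c
    using g by (simp add: commutator_def bounded_op_scale[OF A] bounded_op_scale[OF IB]
        bounded_op_l2[OF A] bounded_op_l2[OF IB] right_diff_distrib)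
  have bnd: "l2norm (commutator A B g) \<le> sqrt (4 * CA * CB) * l2norm g" if g: "g \<in> l2" for g
  proof -
    have "sqnorm (commutator A B g) \<le> 2 * sqnorm (A (id_tensor B g)) + 2 * sqnorm (id_tensor B (A g))"
      unfolding commutator_def using g
      by (intro sqnorm_diff_le bounded_op_l2[OF A] bounded_op_l2[OF IB])
    also have "\<dots> \<le> 2 * (CA * (CB * sqnorm g)) + 2 * (CB * (CA * sqnorm g))"
      using CA(2)[OF bounded_op_l2[OF IB g]] mult_left_mono[OF CB(2)[OF g] CA(1)]
        CB(2)[OF bounded_op_l2[OF A g]] mult_left_mono[OF CA(2)[OF g] CB(1)]
      by linarith
    finally have "sqnorm (commutator A B g) \<le> 4 * CA * CB * sqnorm g" by simp
    then show ?thesis by (simp add: l2norm_sqnorm real_sqrt_mult[symmetric])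
  qed
  have "l2norm (commutator A B f) \<le> opnorm (commutator A B) * l2norm f"
    by (rule opnorm_bound[OF hom bnd f])
  also have "\<dots> \<le> \<epsilon> * opnorm B * l2norm f"
    using comm B by (intro mult_right_mono) (auto simp: almost_commutes_def l2norm_nonneg)
  finally show "l2norm (commutator A B f) \<le> \<epsilon> * opnorm B * l2norm f" .
qed

text \<open>Conjugating A by a sign-flip unitary U = 1 (x) sign_flip S moves it by at most eps:
  U A U psi - A psi = U [A, U] psi.\<close>
lemma sign_flip_conjugate_bound:
  assumes \<psi>: "\<psi> \<in> l2"
  shows "weakly_bounded (\<lambda>x. flip_sign S (snd x) * A (id_tensor (sign_flip S) \<psi>) x - A \<psi> x) (\<epsilon> * l2norm \<psi>)"
proof -
  let ?w = "commutator A (sign_flip S) \<psi>"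
  note w = commutator_bound[OF bounded_op_sign_flip \<psi>, of S]
  have eq: "(\<lambda>x. flip_sign S (snd x) * A (id_tensor (sign_flip S) \<psi>) x - A \<psi> x) = id_tensor (sign_flip S) ?w"
    by (simp add: commutator_def id_tensor_sign_flip right_diff_distrib mult.assoc[symmetric])
  have "l2norm (id_tensor (sign_flip S) ?w) = l2norm ?w"
    by (simp add: id_tensor_sign_flip l2norm_def norm_mult)
  also have "\<dots> \<le> \<epsilon> * l2norm \<psi>"
    using w(2) order_trans[OF _ mult_right_mono[OF mult_left_mono[OF opnorm_sign_flip eps] l2norm_nonneg]]
    by simp
  finally show ?thesis
    unfolding eq by (rule weakly_bounded_of_l2[OF bounded_op_l2[OF bounded_op_id_tensor[OF bounded_op_sign_flip] w(1)]])
qed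

text \<open>The pinching of A differs from A by at most eps, since it is an average of conjugates
  of A by sign-flip unitaries.\<close>
lemma pinching_bound:
  assumes \<psi>: "\<psi> \<in> l2"
  shows "weakly_bounded (\<lambda>x. A (column_part \<psi> (snd x)) x - A \<psi> x) (\<epsilon> * l2norm \<psi>)"
  unfolding weakly_bounded_def
proof (intro allI impI)
  fix G :: "('a \<times> 'b) set" and \<phi> :: "'a \<times> 'b \<Rightarrow> complex" assume G: "finite G"
  define F where "F = snd ` G"
  define N where "N = card (Pow F)"
  have F: "finite F" unfolding F_def using G by simp
  have N: "N > 0" unfolding N_def using F by (auto simp: card_gt_0_iff)
  let ?s = "sqrt (\<Sum>x\<in>G. (cmod (\<phi> x))\<^sup>2)"
  let ?v = "\<lambda>S x. flip_sign S (snd x) * A (id_tensor (sign_flip S) \<psi>) x - A \<psi> x"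
  have avg: "of_nat N * (A (column_part \<psi> (snd x)) x - A \<psi> x) = (\<Sum>S\<in>Pow F. ?v S x)"
    if "x \<in> G" for x
  proof -
    have "snd x \<in> F" unfolding F_def using that by simp
    then have "(\<Sum>S\<in>Pow F. flip_sign S (snd x) * A (id_tensor (sign_flip S) \<psi>) x)
        = of_nat N * A (column_part \<psi> (snd x)) x"
      unfolding N_def by (rule pinching_average[OF A \<psi> F])
    then show ?thesis by (simp add: sum_subtractf N_def right_diff_distrib)
  qed
  let ?D = "\<Sum>x\<in>G. cnj (\<phi> x) * (A (column_part \<psi> (snd x)) x - A \<psi> x)"
  have "of_nat N * ?D = (\<Sum>x\<in>G. cnj (\<phi> x) * (of_nat N * (A (column_part \<psi> (snd x)) x - A \<psi> x)))"
    by (simp add: sum_distrib_left mult.left_commute)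
  also have "\<dots> = (\<Sum>x\<in>G. \<Sum>S\<in>Pow F. cnj (\<phi> x) * ?v S x)"
    by (rule sum.cong) (simp_all add: avg sum_distrib_left)
  also have "\<dots> = (\<Sum>S\<in>Pow F. \<Sum>x\<in>G. cnj (\<phi> x) * ?v S x)"
    by (rule sum.swap)
  finally have "real N * cmod ?D = cmod (\<Sum>S\<in>Pow F. \<Sum>x\<in>G. cnj (\<phi> x) * ?v S x)"
    by (simp only: norm_mult[symmetric] norm_of_nat[symmetric, where 'a = complex])
  also have "\<dots> \<le> (\<Sum>S\<in>Pow F. \<epsilon> * l2norm \<psi> * ?s)"
    by (intro order_trans[OF norm_sum] sum_mono weakly_boundedD[OF sign_flip_conjugate_bound[OF \<psi>] G])
  also have "\<dots> = real N * (\<epsilon> * l2norm \<psi> * ?s)" by (simp add: N_def)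
  finally show "cmod ?D \<le> \<epsilon> * l2norm \<psi> * ?s"
    using N by simp
qed

text \<open>On the column a, the difference between A_xi (x) 1 and the pinching of A is (minus) the
  commutator of A with the rank-one contraction 1 (x) |delta_a><xi|, evaluated at
  psi_a (x) xi, where psi_a is the a-th column of psi.\<close>
lemma column_defect_bound:
  assumes \<xi>: "\<xi> \<in> l2" "l2inner \<xi> \<xi> = 1" and \<psi>: "\<psi> \<in> l2"
  shows "weakly_bounded
    (\<lambda>x. if snd x = a then partial_vec A \<xi> (\<lambda>i. \<psi> (i, a)) (fst x) - A (column_part \<psi> a) x else 0)
    (\<epsilon> * l2norm (\<lambda>i. \<psi> (i, a)))"
proof -
  let ?u = "\<lambda>i. \<psi> (i, a)"
  let ?f = "\<lambda>(i, j). ?u i * \<xi> j"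
  let ?w = "commutator A (rank_one \<xi> a) ?f"
  have unit: "sqnorm \<xi> = 1" by (rule sqnorm_unit[OF \<xi>])
  have u: "?u \<in> l2" by (rule l2_columns(1)[OF \<psi>])
  have f: "?f \<in> l2" and f_norm: "l2norm ?f = l2norm ?u"
    using l2_tensor[OF u \<xi>(1)] unit by (auto simp: l2norm_sqnorm)
  note R = rank_one_contraction[OF \<xi>(1) unit, of a]
  note w = commutator_bound[OF R(1) f]
  have "id_tensor (rank_one \<xi> a) ?f = column_part \<psi> a"
    using \<xi>(2) by (auto simp: id_tensor_def rank_one_def column_part_def l2inner_scale fun_eq_iff)
  then have defect: "(\<lambda>x. if snd x = a then partial_vec A \<xi> ?u (fst x) - A (column_part \<psi> a) x else 0)
      = (\<lambda>x. - 1 * (if snd x = a then ?w x else 0))"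
    by (auto simp: fun_eq_iff commutator_def id_tensor_def rank_one_def partial_vec_def l2inner_def)
  have "l2norm (\<lambda>x. if snd x = a then ?w x else 0) \<le> l2norm ?w"
    by (rule l2norm_restrict_le[OF w(1)])
  also have "\<dots> \<le> \<epsilon> * l2norm ?u"
    using w(2) mult_right_mono[OF mult_left_mono[OF R(2) eps] l2norm_nonneg, of ?f] f_norm by simp
  finally show ?thesis
    unfolding defect using l2norm_scale[of "-1" "\<lambda>x. if snd x = a then ?w x else 0"]
    by (intro weakly_bounded_of_l2 l2_scale l2_restrict w(1)) simp
qed

text \<open>Summing the column estimates with Cauchy--Schwarz over the columns: A_xi (x) 1 differs
  from the pinching of A by at most eps.\<close>
lemma diagonal_defect_bound:
  assumes \<xi>: "\<xi> \<in> l2" "l2inner \<xi> \<xi> = 1" and \<psi>: "\<psi> \<in> l2"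
  shows "weakly_bounded
    (\<lambda>x. partial_vec A \<xi> (\<lambda>i. \<psi> (i, snd x)) (fst x) - A (column_part \<psi> (snd x)) x) (\<epsilon> * l2norm \<psi>)"
  unfolding weakly_bounded_def
proof (intro allI impI)
  fix G :: "('a \<times> 'b) set" and \<phi> :: "'a \<times> 'b \<Rightarrow> complex" assume G: "finite G"
  define F where "F = snd ` G"
  have F: "finite F" unfolding F_def using G by simp
  let ?Ga = "\<lambda>a. {x \<in> G. snd x = a}"
  let ?V = "\<lambda>a x. if snd x = a then partial_vec A \<xi> (\<lambda>i. \<psi> (i, a)) (fst x) - A (column_part \<psi> a) x else 0"
  define s where "s a = sqrt (\<Sum>x\<in>?Ga a. (cmod (\<phi> x))\<^sup>2)" for a
  define t where "t a = l2norm (\<lambda>i. \<psi> (i, a))" for a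
  have s_t_nonneg: "s a \<ge> 0" "t a \<ge> 0" for a
    unfolding s_def t_def by (auto intro: sum_nonneg simp: l2norm_nonneg)
  have group: "(\<Sum>a\<in>F. \<Sum>x\<in>?Ga a. h x) = (\<Sum>x\<in>G. h x)" for h :: "'a \<times> 'b \<Rightarrow> 'c::comm_monoid_add"
    by (rule sum.group[OF G F]) (simp add: F_def)
  have "(\<Sum>x\<in>G. cnj (\<phi> x) * (partial_vec A \<xi> (\<lambda>i. \<psi> (i, snd x)) (fst x) - A (column_part \<psi> (snd x)) x))
      = (\<Sum>a\<in>F. \<Sum>x\<in>?Ga a. cnj (\<phi> x) * ?V a x)"
    unfolding group[symmetric] by (intro sum.cong) auto
  also have "cmod \<dots> \<le> (\<Sum>a\<in>F. \<epsilon> * t a * s a)"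
    unfolding s_def t_def using G
    by (intro order_trans[OF norm_sum] sum_mono weakly_boundedD[OF column_defect_bound[OF \<xi> \<psi>]]) simp
  also have "\<dots> = \<epsilon> * (\<Sum>a\<in>F. \<bar>t a\<bar> * \<bar>s a\<bar>)"
    using s_t_nonneg by (simp add: sum_distrib_left mult.assoc)
  also have "\<dots> \<le> \<epsilon> * (L2_set t F * L2_set s F)"
    by (rule mult_left_mono[OF L2_set_mult_ineq eps])
  also have "\<dots> \<le> \<epsilon> * (l2norm \<psi> * sqrt (\<Sum>x\<in>G. (cmod (\<phi> x))\<^sup>2))"
  proof -
    have "L2_set s F = sqrt (\<Sum>x\<in>G. (cmod (\<phi> x))\<^sup>2)"
      unfolding L2_set_def s_def by (simp add: sum_nonneg group)
    moreover have "L2_set t F \<le> l2norm \<psi>"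
      unfolding L2_set_def t_def l2norm_sqnorm using l2_columns(2)[OF \<psi> F] by (simp add: sqnorm_nonneg)
    ultimately show ?thesis
      using mult_right_mono[of "L2_set t F" "l2norm \<psi>" "L2_set s F"] L2_set_nonneg[of s F]
      by (intro mult_left_mono[OF _ eps]) simp
  qed
  finally show "cmod (\<Sum>x\<in>G. cnj (\<phi> x) * (partial_vec A \<xi> (\<lambda>i. \<psi> (i, snd x)) (fst x)
      - A (column_part \<psi> (snd x)) x)) \<le> \<epsilon> * l2norm \<psi> * sqrt (\<Sum>x\<in>G. (cmod (\<phi> x))\<^sup>2)"
    by (simp add: mult.assoc)
qed

lemma pure_state_bound:
  assumes \<xi>: "\<xi> \<in> l2" "l2inner \<xi> \<xi> = 1" and \<psi>: "\<psi> \<in> l2"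
  shows "weakly_bounded (\<lambda>x. partial_vec A \<xi> (\<lambda>i. \<psi> (i, snd x)) (fst x) - A \<psi> x) (2 * \<epsilon> * l2norm \<psi>)"
  using weakly_bounded_add[OF diagonal_defect_bound[OF \<xi> \<psi>] pinching_bound[OF \<psi>]] by (simp add: mult.assoc)

text \<open>Mixed states: Pi(A) (x) 1 - A is the rho-weighted sum of the pure-state differences, the
  series converging pointwise because each term is bounded by 2 eps norm psi.\<close>
lemma partial_state_bound:
  fixes \<rho> :: "'k \<Rightarrow> real" and \<xi> :: "'k \<Rightarrow> 'b \<Rightarrow> complex"
  assumes \<rho>: "\<And>k. k \<in> K \<Longrightarrow> \<rho> k \<ge> 0" "(\<rho> has_sum 1) K"
    and \<xi>: "\<And>k. k \<in> K \<Longrightarrow> \<xi> k \<in> l2" "\<And>k. k \<in> K \<Longrightarrow> l2inner (\<xi> k) (\<xi> k) = 1"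
    and \<psi>: "\<psi> \<in> l2"
  shows "weakly_bounded (\<lambda>x. tensor_id (partial_state \<rho> \<xi> K A) \<psi> x - A \<psi> x) (2 * \<epsilon> * l2norm \<psi>)"
proof (rule weakly_bounded_convex[OF \<rho>])
  let ?pv = "\<lambda>k x. partial_vec A (\<xi> k) (\<lambda>i. \<psi> (i, snd x)) (fst x)"
  note pure = pure_state_bound[OF \<xi> \<psi>]
  show "weakly_bounded (\<lambda>x. ?pv k x - A \<psi> x) (2 * \<epsilon> * l2norm \<psi>)" if "k \<in> K" for k
    by (rule pure[OF that that])
  fix x :: "'a \<times> 'b"
  have "(\<lambda>k. \<rho> k * (cmod (A \<psi> x) + 2 * \<epsilon> * l2norm \<psi>)) summable_on K"
    using \<rho>(2) by (intro summable_on_cmult_left) (auto simp: has_sum_iff)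
  then have "(\<lambda>k. norm (complex_of_real (\<rho> k) * ?pv k x)) summable_on K"
  proof (rule summable_on_comparison_test)
    fix k assume k: "k \<in> K"
    have "cmod (?pv k x) \<le> cmod (A \<psi> x) + 2 * \<epsilon> * l2norm \<psi>"
      using weakly_bounded_pointwise[OF pure[OF k k], of x] norm_triangle_ineq2[of "?pv k x" "A \<psi> x"]
      by linarith
    then show "norm (complex_of_real (\<rho> k) * ?pv k x) \<le> \<rho> k * (cmod (A \<psi> x) + 2 * \<epsilon> * l2norm \<psi>)"
      using \<rho>(1)[OF k] by (simp add: norm_mult mult_left_mono)
  qed simp
  then have "((\<lambda>k. complex_of_real (\<rho> k) * ?pv k x) has_sum tensor_id (partial_state \<rho> \<xi> K A) \<psi> x) K"
    by (cases x) (simp add: abs_summable_summable has_sum_infsum tensor_id_def partial_state_def)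
  moreover have "((\<lambda>k. - (complex_of_real (\<rho> k) * A \<psi> x)) has_sum - A \<psi> x) K"
    using has_sum_uminusI[OF has_sum_cmult_left[OF has_sum_of_real[OF \<rho>(2)], of "A \<psi> x"]] by simp
  ultimately show "((\<lambda>k. complex_of_real (\<rho> k) * (?pv k x - A \<psi> x)) has_sum
      (tensor_id (partial_state \<rho> \<xi> K A) \<psi> x - A \<psi> x)) K"
    using has_sum_add by (fastforce simp: right_diff_distrib)
qed

end

text \<open>The theorem: the bound for the operator norm follows from the weak bound for mixed
  states.\<close>
theorem mainTheorem6:
  fixes A :: "('a \<times> 'b \<Rightarrow> complex) \<Rightarrow> ('a \<times> 'b \<Rightarrow> complex)"
    and \<rho> :: "'k \<Rightarrow> real" and \<xi> :: "'k \<Rightarrow> 'b \<Rightarrow> complex" and K :: "'k set"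
    and \<epsilon> :: real
  assumes "bounded_op A"
    and "\<epsilon> \<ge> 0"
    and "\<forall>k\<in>K. \<rho> k \<ge> 0"
    and "(\<rho> has_sum 1) K"
    and "\<forall>k\<in>K. \<xi> k \<in> l2"
    and "\<forall>k\<in>K. \<forall>k'\<in>K. l2inner (\<xi> k) (\<xi> k') = (if k = k' then 1 else 0)"
    and "\<forall>B :: ('b \<Rightarrow> complex) \<Rightarrow> ('b \<Rightarrow> complex). bounded_op B \<longrightarrow>
           opnorm (\<lambda>f x. A (id_tensor B f) x - id_tensor B (A f) x) \<le> \<epsilon> * opnorm B"
  shows "opnorm (\<lambda>f x. tensor_id (partial_state \<rho> \<xi> K A) f x - A f x) \<le> 2 * \<epsilon>"
proof (rule opnorm_le)
  fix f :: "'a \<times> 'b \<Rightarrow> complex" assume f: "f \<in> l2" "l2norm f \<le> 1"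
  have comm: "almost_commutes \<epsilon> A"
    using assms(7) by (simp add: almost_commutes_def commutator_def[abs_def])
  have "weakly_bounded (\<lambda>x. tensor_id (partial_state \<rho> \<xi> K A) f x - A f x) (2 * \<epsilon> * l2norm f)"
    using assms(3-6) by (intro partial_state_bound[OF assms(1,2) comm _ assms(4) _ _ f(1)]) auto
  then have "l2norm (\<lambda>x. tensor_id (partial_state \<rho> \<xi> K A) f x - A f x) \<le> 2 * \<epsilon> * l2norm f"
    using assms(2) by (intro weakly_bounded_l2norm) (auto simp: l2norm_nonneg)
  also have "\<dots> \<le> 2 * \<epsilon>"
    using f(2) assms(2) by (simp add: mult_left_le)
  finally show "l2norm (\<lambda>x. tensor_id (partial_state \<rho> \<xi> K A) f x - A f x) \<le> 2 * \<epsilon>" .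
qed

end
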